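(* Let $d_1,d_2\ge1$ be integers and $s_1,s_2$ real numbers, and define $$h_a(x_1,x_2)=\int_{-1}^1(1+x_1z)^{d_1}(1+x_2z)^{d_2}\big(x_a(x_as_a-1)(1-z^2)+z(1-x_a^2)\big)\,dz,\qquad a=1,2.$$ If $s_1>1$ and $s_2<-1$, then there exist $x_1\in(0,1)$ and $x_2\in(-1,0)$ with $h_1(x_1,x_2)=0=h_2(x_1,x_2)$. *)

theory Defs
  imports "HOL-Analysis.Analysis"
begin

definition h_int :: "nat \<Rightarrow> nat \<Rightarrow> real \<Rightarrow> real \<Rightarrow> real \<Rightarrow> real \<Rightarrow> real \<Rightarrow> real" where
  "h_int d1 d2 x1 x2 xa sa z =
     (1 + x1 * z) ^ d1 * (1 + x2 * z) ^ d2 * (xa * (xa * sa - 1) * (1 - z^2) + z * (1 - xa^2))"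

definition h1 :: "nat \<Rightarrow> nat \<Rightarrow> real \<Rightarrow> real \<Rightarrow> real \<Rightarrow> real \<Rightarrow> real" where
  "h1 d1 d2 s1 s2 x1 x2 = integral {-1..1} (h_int d1 d2 x1 x2 x1 s1)"

definition h2 :: "nat \<Rightarrow> nat \<Rightarrow> real \<Rightarrow> real \<Rightarrow> real \<Rightarrow> real \<Rightarrow> real" where
  "h2 d1 d2 s1 s2 x1 x2 = integral {-1..1} (h_int d1 d2 x1 x2 x2 s2)"

end

theory Submission
  imports Defs
begin

text \<open>With the weight w(z) = (1 + x1 z)^d1 (1 + x2 z)^d2, each h_a equals
x_a (x_a s_a - 1) M + (1 - x_a^2) C, where the mass M = \<integral> w (1 - z^2) is positive and the
first moment C = \<integral> z w is increasing in x1 and x2. C is positive on the positive x1-axis and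
negative on the negative x2-axis, so it vanishes at some (e, -\<delta>) with e s1 \<le> 1 and
\<delta> |s2| \<le> 1. On the rectangle [e, 1] \<times> [-1, -\<delta>] the function h1 is then \<le> 0 on the left
edge and > 0 on the right edge, while h2 is < 0 on the bottom edge and \<ge> 0 on the top edge,
and the Poincare-Miranda theorem yields a common zero, which lies off the edges x1 = 1 and
x2 = -1.\<close>

lemma clamped_fixpoint_eq_0:
  fixes a b x v :: real
  assumes "a \<le> b" and "x = max a (min b (x - v))" and "x = a \<Longrightarrow> v \<le> 0" and "x = b \<Longrightarrow> 0 \<le> v"
  shows "v = 0"
  using assms by (auto simp: max_def min_def split: if_splits)

text \<open>Poincare-Miranda: a fixed point of the clamped map p \<mapsto> p - (f p, g p) is a common zero.\<close>

lemma poincare_miranda_2d: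
  fixes f g :: "real \<Rightarrow> real \<Rightarrow> real"
  assumes "a \<le> b" "c \<le> d"
    and "continuous_on ({a..b} \<times> {c..d}) (\<lambda>(x, y). f x y)"
    and "continuous_on ({a..b} \<times> {c..d}) (\<lambda>(x, y). g x y)"
    and "\<And>y. y \<in> {c..d} \<Longrightarrow> f a y \<le> 0" "\<And>y. y \<in> {c..d} \<Longrightarrow> 0 \<le> f b y"
    and "\<And>x. x \<in> {a..b} \<Longrightarrow> g x c \<le> 0" "\<And>x. x \<in> {a..b} \<Longrightarrow> 0 \<le> g x d"
  obtains x y where "x \<in> {a..b}" "y \<in> {c..d}" "f x y = 0" "g x y = 0"
proof -
  let ?S = "{a..b} \<times> {c..d}"
  define F where "F = (\<lambda>(x, y). (max a (min b (x - f x y)), max c (min d (y - g x y))))"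
  obtain p where "p \<in> ?S" "F p = p"
  proof (rule brouwer[of ?S F])
    show "compact ?S" by (intro compact_Times compact_Icc)
    show "convex ?S" by (intro convex_Times convex_real_interval)
    show "?S \<noteq> {}" using assms(1,2) by auto
    show "continuous_on ?S F"
      using assms(3,4) unfolding F_def split_beta by (intro continuous_intros)
    show "F \<in> ?S \<rightarrow> ?S" unfolding F_def using assms(1,2) by auto
  qed
  then obtain x y where xy: "x \<in> {a..b}" "y \<in> {c..d}"
    and fix1: "x = max a (min b (x - f x y))" and fix2: "y = max c (min d (y - g x y))"
    by (cases p) (auto simp: F_def)
  have "f x y = 0" using clamped_fixpoint_eq_0[OF assms(1) fix1] assms(5,6) xy by blast
  moreover have "g x y = 0" using clamped_fixpoint_eq_0[OF assms(2) fix2] assms(7,8) xy by blast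
  ultimately show ?thesis using that xy by blast
qed

lemma power_one_minus_le_one_plus:
  fixes u :: real
  assumes "0 \<le> u"
  shows "(1 - u) ^ d \<le> (1 + u) ^ d"
proof -
  have "(1 - u) ^ d \<le> \<bar>1 - u\<bar> ^ d" by (metis power_abs abs_ge_self)
  also have "\<dots> \<le> (1 + u) ^ d" using assms by (intro power_mono) auto
  finally show ?thesis .
qed

lemma power_one_minus_less_one_plus:
  fixes u :: real
  assumes "0 < u" "0 < d"
  shows "(1 - u) ^ d < (1 + u) ^ d"
proof -
  have "(1 - u) ^ d \<le> \<bar>1 - u\<bar> ^ d" by (metis power_abs abs_ge_self)
  also have "\<dots> < (1 + u) ^ d" using assms by (intro power_strict_mono) auto
  finally show ?thesis .
qed

lemma integral_pos_if_continuous_nonneg: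
  fixes f :: "real \<Rightarrow> real"
  assumes "a < b" "continuous_on {a..b} f" "\<And>z. z \<in> {a..b} \<Longrightarrow> 0 \<le> f z"
    and "c \<in> {a..b}" "0 < f c"
  shows "0 < integral {a..b} f"
proof -
  have "0 \<le> integral {a..b} f"
    using assms by (intro integral_nonneg integrable_continuous_real) auto
  moreover have "integral {a..b} f \<noteq> 0"
    using integral_eq_0_iff[of a b f] assms by force
  ultimately show ?thesis by linarith
qed

text \<open>Symmetrising, the integrand becomes z ((1 + t z)^d - (1 - t z)^d), which is even and
nonnegative.\<close>

lemma integral_mult_power_pos:
  fixes t :: real
  assumes "0 < t" "1 \<le> d"
  shows "0 < integral {-1..1} (\<lambda>z. z * (1 + t * z) ^ d)"
proof -
  let ?f = "\<lambda>z::real. z * (1 + t * z) ^ d"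
  have reflect: "integral {-1..1} (\<lambda>z. ?f (-z)) = integral {-1..1} ?f"
    using Henstock_Kurzweil_Integration.integral_reflect_real[of 1 "-1" ?f] by (simp only: minus_minus)
  have even_nonneg: "0 \<le> ?f z + ?f (-z)" if "0 \<le> z" for z
    using that assms power_one_minus_le_one_plus[of "t * z" d] by (simp add: mult_left_mono)
  have "0 < integral {-1..1} (\<lambda>z. ?f z + ?f (-z))"
  proof (rule integral_pos_if_continuous_nonneg[where c = 1])
    show "0 \<le> ?f z + ?f (-z)" for z
      using even_nonneg[of z] even_nonneg[of "-z"] by (cases "0 \<le> z") auto
    show "0 < ?f 1 + ?f (-1)"
      using power_one_minus_less_one_plus[of t d] assms by simp
  qed (auto intro!: continuous_intros)
  also have "\<dots> = integral {-1..1} ?f + integral {-1..1} (\<lambda>z. ?f (-z))"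
    by (intro integral_add integrable_continuous_interval continuous_intros)
  also have "\<dots> = 2 * integral {-1..1} ?f"
    by (simp only: reflect mult_2)
  finally show ?thesis by simp
qed

definition weight :: "nat \<Rightarrow> nat \<Rightarrow> real \<Rightarrow> real \<Rightarrow> real \<Rightarrow> real" where
  "weight d1 d2 x1 x2 z = (1 + x1 * z) ^ d1 * (1 + x2 * z) ^ d2"

definition weight_mass :: "nat \<Rightarrow> nat \<Rightarrow> real \<Rightarrow> real \<Rightarrow> real" where
  "weight_mass d1 d2 x1 x2 = integral {-1..1} (\<lambda>z. weight d1 d2 x1 x2 z * (1 - z\<^sup>2))"

definition weight_moment :: "nat \<Rightarrow> nat \<Rightarrow> real \<Rightarrow> real \<Rightarrow> real" where
  "weight_moment d1 d2 x1 x2 = integral {-1..1} (\<lambda>z. z * weight d1 d2 x1 x2 z)"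

lemma continuous_on_weight [continuous_intros]:
  "continuous_on S f \<Longrightarrow> continuous_on S g \<Longrightarrow> continuous_on S h \<Longrightarrow>
    continuous_on S (\<lambda>x. weight d1 d2 (f x) (g x) (h x))"
  unfolding weight_def by (intro continuous_intros)

lemma continuous_on_weight_mass [continuous_intros]:
  assumes "continuous_on S f" "continuous_on S g"
  shows "continuous_on S (\<lambda>x. weight_mass d1 d2 (f x) (g x))"
proof -
  have "continuous_on (UNIV \<times> cbox (-1) 1) (\<lambda>(p, z). weight d1 d2 (fst p) (snd p) z * (1 - z\<^sup>2))"
    by (simp add: split_beta) (intro continuous_intros)
  from integral_continuous_on_param[OF this]
  have "continuous_on UNIV (\<lambda>p. weight_mass d1 d2 (fst p) (snd p))"
    by (simp add: weight_mass_def)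
  from continuous_on_compose2[OF this, of S "\<lambda>x. (f x, g x)"] assms show ?thesis
    by (auto intro: continuous_on_Pair)
qed

lemma continuous_on_weight_moment [continuous_intros]:
  assumes "continuous_on S f" "continuous_on S g"
  shows "continuous_on S (\<lambda>x. weight_moment d1 d2 (f x) (g x))"
proof -
  have "continuous_on (UNIV \<times> cbox (-1) 1) (\<lambda>(p, z). z * weight d1 d2 (fst p) (snd p) z)"
    by (simp add: split_beta) (intro continuous_intros)
  from integral_continuous_on_param[OF this]
  have "continuous_on UNIV (\<lambda>p. weight_moment d1 d2 (fst p) (snd p))"
    by (simp add: weight_moment_def)
  from continuous_on_compose2[OF this, of S "\<lambda>x. (f x, g x)"] assms show ?thesis
    by (auto intro: continuous_on_Pair)
qed

lemma integral_h_int: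
  "integral {-1..1} (h_int d1 d2 x1 x2 xa sa) =
     xa * (xa * sa - 1) * weight_mass d1 d2 x1 x2 + (1 - xa\<^sup>2) * weight_moment d1 d2 x1 x2"
proof -
  have "h_int d1 d2 x1 x2 xa sa = (\<lambda>z. xa * (xa * sa - 1) * (weight d1 d2 x1 x2 z * (1 - z\<^sup>2))
      + (1 - xa\<^sup>2) * (z * weight d1 d2 x1 x2 z))"
    by (auto simp: h_int_def weight_def algebra_simps)
  then show ?thesis
    by (simp add: integral_add integrable_continuous_interval continuous_intros
        weight_mass_def weight_moment_def)
qed

lemma h1_eq:
  "h1 d1 d2 s1 s2 x1 x2 =
     x1 * (x1 * s1 - 1) * weight_mass d1 d2 x1 x2 + (1 - x1\<^sup>2) * weight_moment d1 d2 x1 x2"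
  by (simp add: h1_def integral_h_int)

lemma h2_eq:
  "h2 d1 d2 s1 s2 x1 x2 =
     x2 * (x2 * s2 - 1) * weight_mass d1 d2 x1 x2 + (1 - x2\<^sup>2) * weight_moment d1 d2 x1 x2"
  by (simp add: h2_def integral_h_int)

lemma one_plus_mult_nonneg:
  fixes x z :: real
  assumes "x \<in> {-1..1}" "z \<in> {-1..1}"
  shows "0 \<le> 1 + x * z"
proof -
  have "\<bar>x * z\<bar> \<le> 1" using assms by (auto simp: abs_mult intro!: mult_le_one)
  then show ?thesis by (simp add: abs_le_iff)
qed

lemma weight_nonneg:
  "x1 \<in> {-1..1} \<Longrightarrow> x2 \<in> {-1..1} \<Longrightarrow> z \<in> {-1..1} \<Longrightarrow> 0 \<le> weight d1 d2 x1 x2 z"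
  by (simp add: weight_def one_plus_mult_nonneg)

lemma weight_mass_pos:
  assumes "x1 \<in> {-1..1}" "x2 \<in> {-1..1}"
  shows "0 < weight_mass d1 d2 x1 x2"
  unfolding weight_mass_def
proof (rule integral_pos_if_continuous_nonneg[where c = 0])
  fix z :: real assume z: "z \<in> {-1..1}"
  then have "z\<^sup>2 \<le> 1" by (simp add: abs_square_le_1 abs_le_iff)
  then show "0 \<le> weight d1 d2 x1 x2 z * (1 - z\<^sup>2)"
    using weight_nonneg[OF assms z] by simp
qed (auto simp: weight_def intro!: continuous_intros)

lemma weight_moment_mono:
  assumes "-1 \<le> x1" "x1 \<le> y1" "y1 \<le> 1" "-1 \<le> x2" "x2 \<le> y2" "y2 \<le> 1"
  shows "weight_moment d1 d2 x1 x2 \<le> weight_moment d1 d2 y1 y2"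
  unfolding weight_moment_def
proof (rule integral_le)
  fix z :: real assume z: "z \<in> {-1..1}"
  have nonneg: "0 \<le> 1 + x1 * z" "0 \<le> 1 + x2 * z"
    using one_plus_mult_nonneg[OF _ z] assms by auto
  show "z * weight d1 d2 x1 x2 z \<le> z * weight d1 d2 y1 y2 z"
  proof (cases "0 \<le> z")
    case True
    then have "x1 * z \<le> y1 * z" "x2 * z \<le> y2 * z" using assms by (auto intro: mult_right_mono)
    then have "weight d1 d2 x1 x2 z \<le> weight d1 d2 y1 y2 z"
      unfolding weight_def using nonneg by (intro mult_mono power_mono) auto
    then show ?thesis using True by (intro mult_left_mono)
  next
    case False
    have nonneg': "0 \<le> 1 + y1 * z" "0 \<le> 1 + y2 * z"
      using one_plus_mult_nonneg[OF _ z] assms by auto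
    have "y1 * z \<le> x1 * z" "y2 * z \<le> x2 * z" using False assms by (auto intro: mult_right_mono_neg)
    then have "weight d1 d2 y1 y2 z \<le> weight d1 d2 x1 x2 z"
      unfolding weight_def using nonneg' by (intro mult_mono power_mono) auto
    then show ?thesis using False by (intro mult_left_mono_neg) auto
  qed
qed (auto intro!: integrable_continuous_interval continuous_intros)

lemma weight_moment_reflect:
  "weight_moment d1 d2 (-x1) (-x2) = - weight_moment d1 d2 x1 x2"
proof -
  let ?f = "\<lambda>z. z * weight d1 d2 x1 x2 z"
  have "weight_moment d1 d2 (-x1) (-x2) = integral {-1..1} (\<lambda>z. - ?f (-z))"
    unfolding weight_moment_def weight_def by (simp add: algebra_simps)
  also have "\<dots> = - integral {-1..1} ?f"
    using Henstock_Kurzweil_Integration.integral_reflect_real[of 1 "-1" ?f]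
    by (simp only: integral_neg minus_minus)
  finally show ?thesis by (simp add: weight_moment_def)
qed

lemma weight_moment_pos_x1_axis:
  "0 < t \<Longrightarrow> 1 \<le> d1 \<Longrightarrow> 0 < weight_moment d1 d2 t 0"
  using integral_mult_power_pos[of t d1] by (simp add: weight_moment_def weight_def)

lemma weight_moment_neg_x2_axis:
  assumes "0 < t" "1 \<le> d2"
  shows "weight_moment d1 d2 0 (-t) < 0"
proof -
  have "0 < weight_moment d1 d2 0 t"
    using integral_mult_power_pos[OF assms] by (simp add: weight_moment_def weight_def)
  then show ?thesis using weight_moment_reflect[of d1 d2 0 t] by simp
qed

text \<open>Since the moment is positive at (t, 0) and negative at (0, -t), it vanishes on the path
(0, -t) -- (t, -t) -- (t, 0), away from its endpoints.\<close>

lemma weight_moment_zero_near_origin: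
  fixes t :: real
  assumes "0 < t" "1 \<le> d1" "1 \<le> d2"
  obtains e \<delta> where "0 < e" "e \<le> t" "0 < \<delta>" "\<delta> \<le> t" "weight_moment d1 d2 e (-\<delta>) = 0"
proof (cases "0 \<le> weight_moment d1 d2 t (-t)")
  case True
  have "\<exists>u. 0 \<le> u \<and> u \<le> t \<and> weight_moment d1 d2 u (-t) = 0"
    using True weight_moment_neg_x2_axis[OF assms(1,3), of d1] assms(1)
    by (intro IVT') (auto intro!: less_imp_le continuous_intros)
  then obtain u where u: "0 \<le> u" "u \<le> t" "weight_moment d1 d2 u (-t) = 0" by blast
  moreover have "u \<noteq> 0" using u weight_moment_neg_x2_axis[OF assms(1,3), of d1] by auto
  ultimately show ?thesis using that[of u t] assms(1) by auto
next
  case False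
  have "\<exists>u. 0 \<le> u \<and> u \<le> t \<and> weight_moment d1 d2 t (-u) = 0"
    using False weight_moment_pos_x1_axis[OF assms(1,2), of d2] assms(1)
    by (intro IVT2') (auto intro!: less_imp_le continuous_intros)
  then obtain u where u: "0 \<le> u" "u \<le> t" "weight_moment d1 d2 t (-u) = 0" by blast
  moreover have "u \<noteq> 0" using u weight_moment_pos_x1_axis[OF assms(1,2), of d2] by auto
  ultimately show ?thesis using that[of t u] assms(1) by auto
qed

lemma h1_nonpos:
  assumes "x1 \<in> {0..1}" "x1 * s1 \<le> 1" "x2 \<in> {-1..1}" "weight_moment d1 d2 x1 x2 \<le> 0"
  shows "h1 d1 d2 s1 s2 x1 x2 \<le> 0"
proof -
  have "x1 * (x1 * s1 - 1) * weight_mass d1 d2 x1 x2 \<le> 0"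
    using assms weight_mass_pos[of x1 x2 d1 d2]
    by (intro mult_nonpos_nonneg mult_nonneg_nonpos) auto
  moreover have "(1 - x1\<^sup>2) * weight_moment d1 d2 x1 x2 \<le> 0"
    using assms by (intro mult_nonneg_nonpos) (auto simp: abs_square_le_1 abs_le_iff)
  ultimately show ?thesis by (simp add: h1_eq)
qed

lemma h2_nonneg:
  assumes "x2 \<in> {-1..0}" "x2 * s2 \<le> 1" "x1 \<in> {-1..1}" "0 \<le> weight_moment d1 d2 x1 x2"
  shows "0 \<le> h2 d1 d2 s1 s2 x1 x2"
proof -
  have "0 \<le> x2 * (x2 * s2 - 1) * weight_mass d1 d2 x1 x2"
    using assms weight_mass_pos[of x1 x2 d1 d2]
    by (intro mult_nonneg_nonneg mult_nonpos_nonpos) auto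
  moreover have "0 \<le> (1 - x2\<^sup>2) * weight_moment d1 d2 x1 x2"
    using assms by (intro mult_nonneg_nonneg) (auto simp: abs_square_le_1 abs_le_iff)
  ultimately show ?thesis by (simp add: h2_eq)
qed

lemma h1_at_one_pos:
  "1 < s1 \<Longrightarrow> x2 \<in> {-1..1} \<Longrightarrow> 0 < h1 d1 d2 s1 s2 1 x2"
  using weight_mass_pos[of 1 x2 d1 d2] by (simp add: h1_eq)

lemma h2_at_minus_one_neg:
  assumes "s2 < -1" "x1 \<in> {-1..1}"
  shows "h2 d1 d2 s1 s2 x1 (-1) < 0"
proof -
  have "(s2 + 1) * weight_mass d1 d2 x1 (-1) < 0"
    using assms weight_mass_pos[of x1 "-1" d1 d2] by (intro mult_neg_pos) auto
  then show ?thesis by (simp add: h2_eq algebra_simps)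
qed

theorem lemma3p5:
  fixes d1 d2 :: nat and s1 s2 :: real
  assumes "d1 \<ge> 1" and "d2 \<ge> 1" and "s1 > 1" and "s2 < -1"
  shows "\<exists>x1 x2. x1 \<in> {0<..<1} \<and> x2 \<in> {-1<..<0} \<and>
           h1 d1 d2 s1 s2 x1 x2 = 0 \<and> h2 d1 d2 s1 s2 x1 x2 = 0"
proof -
  define t where "t = min (1 / s1) (-1 / s2)"
  have t: "0 < t" "t \<le> 1" "t * s1 \<le> 1" "t * (-s2) \<le> 1"
    using assms by (auto simp: t_def min_def field_simps)
  obtain e \<delta> where e: "0 < e" "e \<le> t" and \<delta>: "0 < \<delta>" "\<delta> \<le> t"
    and moment_zero: "weight_moment d1 d2 e (-\<delta>) = 0"
    using weight_moment_zero_near_origin[OF t(1) assms(1,2)] .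
  have "e * s1 \<le> t * s1" "\<delta> * (-s2) \<le> t * (-s2)"
    using e \<delta> assms by (auto intro!: mult_right_mono)
  then have es1: "e * s1 \<le> 1" and \<delta>s2: "-\<delta> * s2 \<le> 1" using t by auto
  obtain x1 x2 where x: "x1 \<in> {e..1}" "x2 \<in> {-1..-\<delta>}"
    and zero: "h1 d1 d2 s1 s2 x1 x2 = 0" "h2 d1 d2 s1 s2 x1 x2 = 0"
  proof (rule poincare_miranda_2d[of e 1 "-1" "-\<delta>" "h1 d1 d2 s1 s2" "h2 d1 d2 s1 s2"])
    show "continuous_on ({e..1} \<times> {-1..-\<delta>}) (\<lambda>(x1, x2). h1 d1 d2 s1 s2 x1 x2)"
      unfolding h1_eq split_beta by (intro continuous_intros)
    show "continuous_on ({e..1} \<times> {-1..-\<delta>}) (\<lambda>(x1, x2). h2 d1 d2 s1 s2 x1 x2)"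
      unfolding h2_eq split_beta by (intro continuous_intros)
    show "h1 d1 d2 s1 s2 e x2 \<le> 0" if "x2 \<in> {-1..-\<delta>}" for x2
      using that e \<delta> t es1 moment_zero weight_moment_mono[of e e x2 "-\<delta>" d1 d2]
      by (intro h1_nonpos) auto
    show "0 \<le> h2 d1 d2 s1 s2 x1 (-\<delta>)" if "x1 \<in> {e..1}" for x1
      using that e \<delta> t \<delta>s2 moment_zero weight_moment_mono[of e x1 "-\<delta>" "-\<delta>" d1 d2]
      by (intro h2_nonneg) auto
  qed (use e \<delta> t assms in \<open>auto intro!: less_imp_le h1_at_one_pos h2_at_minus_one_neg\<close>)
  moreover have "x1 \<noteq> 1" using zero h1_at_one_pos[of s1 x2 d1 d2 s2] assms x \<delta> by auto
  moreover have "x2 \<noteq> -1" using zero h2_at_minus_one_neg[of s2 x1 d1 d2 s1] assms x e t by auto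
  ultimately show ?thesis using e \<delta> by (intro exI[of _ x1] exI[of _ x2]) auto
qed

end
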